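(* Let $R \subseteq \mathbb{N}$ be computably enumerable and let $A \subseteq \mathbb{N}$ be bi-immune. Then the symmetric difference $A \oplus R = (A - R) \cup (R - A)$ is bi-immune.
   Context: $\mathbb{N}$ denotes the non-negative integers; $\overline{A} = \mathbb{N} - A$. A set $A \subseteq \mathbb{N}$ is immune if (i) $A$ is infinite, and (ii) for every infinite computably enumerable set $R \subseteq \mathbb{N}$, $R \cap \overline{A} \neq \emptyset$ (i.e. $A$ contains no infinite c.e. subset). $A$ is bi-immune if both $A$ and $\overline{A}$ are immune. *)

theory Defs
  imports Main
begin

datatype recf =
    Z
  | S
  | Proj nat
  | Comp recf "recf list"
  | Prim recf recf
  | Mn recf

inductive eval :: "recf \<Rightarrow> nat list \<Rightarrow> nat \<Rightarrow> bool" where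
  eval_Z: "eval Z xs 0"
| eval_S: "eval S (x # xs) (Suc x)"
| eval_Proj: "i < length xs \<Longrightarrow> eval (Proj i) xs (xs ! i)"
| eval_Comp: "list_all2 (\<lambda>g y. eval g xs y) gs ys \<Longrightarrow> eval f ys z \<Longrightarrow> eval (Comp f gs) xs z"
| eval_Prim0: "eval f xs y \<Longrightarrow> eval (Prim f g) (0 # xs) y"
| eval_PrimS: "eval (Prim f g) (n # xs) y \<Longrightarrow> eval g (n # y # xs) z
      \<Longrightarrow> eval (Prim f g) (Suc n # xs) z"
| eval_Mn: "eval f (y # xs) 0 \<Longrightarrow> (\<forall>z<y. \<exists>k. eval f (z # xs) (Suc k))
      \<Longrightarrow> eval (Mn f) xs y"
monos list.rel_mono_strong

definition ce :: "nat set \<Rightarrow> bool" where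
  "ce R \<longleftrightarrow> (\<exists>f. R = {x. \<exists>y. eval f [x] y})"

definition immune :: "nat set \<Rightarrow> bool" where
  "immune A \<longleftrightarrow> infinite A \<and> (\<forall>R. ce R \<and> infinite R \<longrightarrow> R \<inter> (UNIV - A) \<noteq> {})"

definition bi_immune :: "nat set \<Rightarrow> bool" where
  "bi_immune A \<longleftrightarrow> immune A \<and> immune (UNIV - A)"

end

theory Submission
  imports Defs
begin

text \<open>If \<open>W\<close> is c.e. and contained in \<open>A \<oplus> R\<close>, then \<open>W \<inter> R\<close> is a c.e. subset of \<open>\<overline>A\<close>,
hence finite; removing it (up to a c.e. cofinite cut \<open>W \<inter> {n<..}\<close>) leaves a c.e. subset of \<open>A\<close>,
hence finite again, so \<open>W\<close> is finite. If \<open>A \<oplus> R\<close> were finite, the same cut would put almost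
all of \<open>R\<close> inside \<open>A\<close>, forcing \<open>R\<close> and then \<open>A\<close> to be finite. Since the complement of
\<open>A \<oplus> R\<close> is \<open>\<overline>A \<oplus> R\<close>, bi-immunity follows by symmetry.\<close>

lemma list_all2_functional:
  assumes "list_all2 P xs ys" "list_all2 Q xs zs"
    and "\<And>x y z. P x y \<Longrightarrow> Q x z \<Longrightarrow> y = z"
  shows "ys = zs"
  using assms(1,2)
proof (induction arbitrary: zs rule: list_all2_induct)
  case Nil
  then show ?case by simp
next
  case (Cons x xs y ys)
  then show ?case by (auto simp: list_all2_Cons1 intro: assms(3))
qed

inductive_cases evalE_Z: "eval Z xs y"
inductive_cases evalE_S: "eval S xs y"
inductive_cases evalE_Proj: "eval (Proj i) xs y"
inductive_cases evalE_Comp: "eval (Comp f gs) xs y"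
inductive_cases evalE_Prim0: "eval (Prim f g) (0 # xs) y"
inductive_cases evalE_PrimS: "eval (Prim f g) (Suc n # xs) y"
inductive_cases evalE_Mn: "eval (Mn f) xs y"

lemma eval_functional: "eval f xs y \<Longrightarrow> eval f xs z \<Longrightarrow> y = z"
proof (induction arbitrary: z rule: eval.induct)
  case (eval_Z xs)
  then show ?case by (auto elim: evalE_Z)
next
  case (eval_S x xs)
  then show ?case by (auto elim: evalE_S)
next
  case (eval_Proj i xs)
  then show ?case by (auto elim: evalE_Proj)
next
  case (eval_Comp xs gs ys f y)
  from eval_Comp.prems obtain ys' where ys': "list_all2 (\<lambda>g. eval g xs) gs ys'" "eval f ys' z"
    by (rule evalE_Comp)
  have "ys = ys'"
    by (rule list_all2_functional[OF eval_Comp(1) ys'(1)]) blast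
  with ys'(2) show ?case using eval_Comp.IH(2) by simp
next
  case (eval_Prim0 f xs y g)
  from eval_Prim0.prems have "eval f xs z" by (rule evalE_Prim0)
  then show ?case by (rule eval_Prim0.IH)
next
  case (eval_PrimS f g n xs y z')
  from eval_PrimS.prems obtain y' where "eval (Prim f g) (n # xs) y'" "eval g (n # y' # xs) z"
    by (rule evalE_PrimS)
  then show ?case using eval_PrimS.IH by metis
next
  case (eval_Mn f y xs)
  from eval_Mn.prems have z: "eval f (z # xs) 0" "\<forall>u<z. \<exists>k. eval f (u # xs) (Suc k)"
    by (auto elim: evalE_Mn)
  show ?case
  proof (rule linorder_cases)
    assume "y < z"
    then show ?thesis using z(2) eval_Mn.IH(1) by blast
  next
    assume "z < y"
    then show ?thesis using z(1) eval_Mn.IH(2) by blast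
  qed
qed

primrec recf_const :: "nat \<Rightarrow> recf" where
  "recf_const 0 = Z"
| "recf_const (Suc k) = Comp S [recf_const k]"

lemma eval_recf_const: "eval (recf_const k) xs k"
proof (induction k)
  case 0
  show ?case by (simp add: eval_Z)
next
  case (Suc k)
  then show ?case by (auto intro!: eval_Comp[where ys = "[k]"] eval_S)
qed

definition recf_pred :: recf where
  "recf_pred = Prim Z (Proj 0)"

lemma eval_recf_pred: "eval recf_pred [x] (x - 1)"
proof (induction x)
  case 0
  show ?case unfolding recf_pred_def by (auto intro: eval_Prim0 eval_Z)
next
  case (Suc x)
  have "eval (Proj 0) [x, x - 1] x" using eval_Proj[of 0 "[x, x - 1]"] by simp
  with Suc show ?case unfolding recf_pred_def by (auto intro: eval_PrimS)
qed

definition recf_diff_from :: "nat \<Rightarrow> recf" where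
  "recf_diff_from k = Prim (recf_const k) (Comp recf_pred [Proj 1])"

lemma eval_recf_diff_from: "eval (recf_diff_from k) [x] (k - x)"
proof (induction x)
  case 0
  show ?case unfolding recf_diff_from_def by (auto intro: eval_Prim0 eval_recf_const)
next
  case (Suc x)
  have "eval (Comp recf_pred [Proj 1]) [x, k - x] (k - Suc x)"
    using eval_Proj[of 1 "[x, k - x]"] eval_recf_pred[of "k - x"]
    by (auto intro!: eval_Comp[where ys = "[k - x]"])
  with Suc show ?case unfolding recf_diff_from_def by (auto intro: eval_PrimS)
qed

text \<open>The minimisation of \<open>\<lambda>y. Suc n - x\<close> halts on \<open>x\<close> exactly when \<open>n < x\<close>.\<close>

lemma ce_greaterThan: "ce {n<..}"
proof -
  define f where "f = Comp (recf_diff_from (Suc n)) [Proj 1]"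
  have f: "eval f [y, x] (Suc n - x)" for x y
    using eval_Proj[of 1 "[y, x]"] eval_recf_diff_from[of "Suc n" x]
    unfolding f_def by (auto intro!: eval_Comp[where ys = "[x]"])
  have "{n<..} = {x. \<exists>y. eval (Mn f) [x] y}"
  proof (intro set_eqI iffI; clarsimp)
    fix x assume "n < x"
    then have "eval (Mn f) [x] 0" using f[of 0 x] by (auto intro: eval_Mn)
    then show "\<exists>y. eval (Mn f) [x] y" ..
  next
    fix x y assume "eval (Mn f) [x] y"
    then have "eval f [y, x] 0" by (rule evalE_Mn)
    with f have "Suc n - x = 0" by (rule eval_functional)
    then show "n < x" by simp
  qed
  then show ?thesis unfolding ce_def by blast
qed

lemma ce_Int:
  assumes "ce W" "ce R"
  shows "ce (W \<inter> R)"
proof -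
  obtain f g where f: "W = {x. \<exists>y. eval f [x] y}" and g: "R = {x. \<exists>y. eval g [x] y}"
    using assms unfolding ce_def by blast
  have "W \<inter> R = {x. \<exists>y. eval (Comp Z [f, g]) [x] y}"
  proof (intro set_eqI iffI; clarsimp)
    fix x assume "x \<in> W" "x \<in> R"
    then obtain a b where "eval f [x] a" "eval g [x] b" using f g by blast
    then have "eval (Comp Z [f, g]) [x] 0"
      by (intro eval_Comp[where ys = "[a, b]"]) (auto intro: eval_Z)
    then show "\<exists>y. eval (Comp Z [f, g]) [x] y" ..
  next
    fix x y assume "eval (Comp Z [f, g]) [x] y"
    then show "x \<in> W \<and> x \<in> R" using f g by (auto elim!: evalE_Comp simp: list_all2_Cons1)
  qed
  then show ?thesis unfolding ce_def by blast
qed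

lemma ce_Diff_finite:
  assumes "ce W" "finite F"
  obtains V where "ce V" "V \<subseteq> W - F" "finite (W - V)"
proof -
  obtain n where n: "\<forall>x\<in>F. x \<le> n"
    using assms(2) finite_nat_set_iff_bounded_le by blast
  show thesis
  proof
    show "ce (W \<inter> {n<..})" using assms(1) ce_greaterThan by (rule ce_Int)
    show "W \<inter> {n<..} \<subseteq> W - F" using n by force
    show "finite (W - W \<inter> {n<..})" by (rule finite_subset[of _ "{..n}"]) auto
  qed
qed

lemma immune_ce_subset_finite:
  assumes "immune A" "ce V" "V \<subseteq> A"
  shows "finite V"
  using assms unfolding immune_def by blast

lemma immune_sym_diff:
  assumes R: "ce R" and A: "immune A" and notA: "immune (UNIV - A)"
  shows "immune (sym_diff A R)"
  unfolding immune_def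
proof (intro conjI allI impI notI)
  assume finite_sym_diff: "finite (sym_diff A R)"
  then obtain V where V: "ce V" "V \<subseteq> R - (R - A)" "finite (R - V)"
    using ce_Diff_finite[OF R, of "R - A"] by blast
  have "finite V" using A V(1) by (rule immune_ce_subset_finite) (use V(2) in blast)
  with V(3) have "finite R" by (metis finite_Diff2)
  with finite_sym_diff have "finite A" by (metis Un_Diff_cancel2 finite_Diff2 finite_Un)
  with A show False unfolding immune_def by blast
next
  fix W assume W: "ce W \<and> infinite W" and "W \<inter> (UNIV - sym_diff A R) = {}"
  then have W_sub: "W \<subseteq> sym_diff A R" by blast
  have "finite (W \<inter> R)"
    using notA ce_Int[OF conjunct1[OF W] R] by (rule immune_ce_subset_finite) (use W_sub in blast)
  then obtain V where V: "ce V" "V \<subseteq> W - W \<inter> R" "finite (W - V)"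
    using ce_Diff_finite W by blast
  have "finite V" using A V(1) by (rule immune_ce_subset_finite) (use V(2) W_sub in blast)
  with V(3) W show False by (metis finite_Diff2)
qed

theorem lemma2p3:
  fixes A R :: "nat set"
  assumes "ce R" and "bi_immune A"
  shows "bi_immune ((A - R) \<union> (R - A))"
proof -
  have A: "immune A" and notA: "immune (UNIV - A)"
    using assms(2) unfolding bi_immune_def by auto
  have "UNIV - sym_diff A R = sym_diff (UNIV - A) R"
    by blast
  moreover have "immune (sym_diff (UNIV - A) R)"
    using immune_sym_diff[OF assms(1) notA] A by (simp add: Diff_Diff_Int)
  ultimately show ?thesis
    unfolding bi_immune_def using immune_sym_diff[OF assms(1) A notA] by simp
qed

end
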